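(* Let $G$ be a connected graph on $n$ nodes. Let $v_1,\dots,v_\ell\in\mathbb R^n$ and $\lambda_1,\dots,\lambda_\ell\ge0$ with $\sum_i\lambda_i=1$, and put $v=\sum_{i=1}^\ell\lambda_iv_i$. Let $v(t)$ denote the state of the averaging process started from $v$, and $v_i(t)$ the state of the process started from $v_i$; let $\bar v$ and $\bar v_i$ be the corresponding constant vectors of averages. Then for every $t\ge0$, $$\mathbb E\|v(t)-\bar v\|_1\;\le\;\sum_{i=1}^\ell\lambda_i\,\mathbb E\|v_i(t)-\bar v_i\|_1 .$$
   Context: The averaging process on a finite, undirected, connected graph $G=(V,E)$, $V=\{1,\dots,n\}$: the state vector $v(t)\in\mathbb R^n$, $t=0,1,2,\dots$, starts from a given $v(0)$; at each step $t\ge 1$ an edge $\{i,j\}\in E$ is chosen uniformly at random (independently of all previous choices) and both $v_i$ and $v_j$ are replaced by $(v_i+v_j)/2$, all other coordinates unchanged. For an initial vector $w$, its constant vector of averages is $\bar w=(a,\dots,a)^T$ with $a=\frac1n\sum_j w_j$. *)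

theory Defs
  imports "HOL-Probability.Probability"
begin

text \<open>Graphs: vertex set is the finite type 'a (so n = CARD('a)); edges are
  2-element subsets of the vertex set.\<close>

definition adj :: "'a set set \<Rightarrow> ('a \<times> 'a) set" where
  "adj E = {(x, y). {x, y} \<in> E}"

definition connected_graph :: "'a set set \<Rightarrow> bool" where
  "connected_graph E \<longleftrightarrow> (\<forall>e\<in>E. card e = 2) \<and> (\<forall>x y. (x, y) \<in> (adj E)\<^sup>*)"

definition avg_edge :: "'a set \<Rightarrow> ('a \<Rightarrow> real) \<Rightarrow> ('a \<Rightarrow> real)" where
  "avg_edge e w = (\<lambda>k. if k \<in> e then (\<Sum>j\<in>e. w j) / 2 else w k)"

fun avg_process :: "'a set set \<Rightarrow> ('a \<Rightarrow> real) \<Rightarrow> nat \<Rightarrow> ('a \<Rightarrow> real) pmf" where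
  "avg_process E v 0 = return_pmf v"
| "avg_process E v (Suc t) =
     bind_pmf (avg_process E v t)
       (\<lambda>w. if E = {} then return_pmf w else map_pmf (\<lambda>e. avg_edge e w) (pmf_of_set E))"

definition avg_vec :: "('a::finite \<Rightarrow> real) \<Rightarrow> ('a \<Rightarrow> real)" where
  "avg_vec w = (\<lambda>_. (\<Sum>j\<in>UNIV. w j) / real CARD('a))"

definition l1_norm :: "('a::finite \<Rightarrow> real) \<Rightarrow> real" where
  "l1_norm w = (\<Sum>k\<in>UNIV. \<bar>w k\<bar>)"

end

(*
  Drive the processes for all initial vectors by one common sequence of random edges.
  The state after t steps is then F v for a random linear map F (a product of edge
  averagings), and the vector of averages is linear in v as well. Hence for every
  realisation of F the deviation v \<mapsto> |F v - avg_vec v|_1 is a convex function of v,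
  so is its expectation, and the claim is Jensen's inequality for this convex function.
*)

theory Submission
  imports Defs "HOL-Library.Function_Algebras"
begin

text \<open>Pointwise vector space structure on functions, so that initial vectors
  \<^typ>\<open>'a \<Rightarrow> real\<close> can be used with \<^const>\<open>linear\<close> and \<^const>\<open>convex_on\<close>.\<close>

instantiation "fun" :: (type, real_vector) real_vector
begin

definition scaleR_fun :: "real \<Rightarrow> ('a \<Rightarrow> 'b) \<Rightarrow> 'a \<Rightarrow> 'b" where
  "c *\<^sub>R f = (\<lambda>x. c *\<^sub>R f x)"

instance
  by standard (simp_all add: scaleR_fun_def fun_eq_iff algebra_simps)

end

lemma scaleR_fun_apply [simp]: "(c *\<^sub>R f) x = c *\<^sub>R f x"
  by (simp add: scaleR_fun_def)

lemma sum_fun_apply [simp]: "(\<Sum>a\<in>A. f a) x = (\<Sum>a\<in>A. f a x)"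
  by (induction A rule: infinite_finite_induct) simp_all

lemma convex_on_compose_linear:
  assumes "linear f" and "convex_on UNIV g"
  shows "convex_on UNIV (g \<circ> f)"
proof (rule convex_onI)
  fix t :: real and x y
  assume "t > 0" "t < 1"
  then show "(g \<circ> f) ((1 - t) *\<^sub>R x + t *\<^sub>R y) \<le> (1 - t) * (g \<circ> f) x + t * (g \<circ> f) y"
    using convex_onD[OF assms(2), of t "f x" "f y"]
    by (simp add: linear_add[OF assms(1)] linear_cmul[OF assms(1)])
qed simp

lemma convex_on_expectation:
  fixes g :: "'b \<Rightarrow> 'a::real_vector \<Rightarrow> real"
  assumes "finite (set_pmf p)" and "convex C"
    and "\<And>x. x \<in> set_pmf p \<Longrightarrow> convex_on C (g x)"
  shows "convex_on C (\<lambda>v. measure_pmf.expectation p (\<lambda>x. g x v))"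
proof (rule convex_onI[OF _ assms(2)])
  fix t :: real and u v
  assume t: "t > 0" "t < 1" and uv: "u \<in> C" "v \<in> C"
  have int: "integrable (measure_pmf p) h" for h :: "'b \<Rightarrow> real"
    using assms(1) by (rule integrable_measure_pmf_finite)
  have "measure_pmf.expectation p (\<lambda>x. g x ((1 - t) *\<^sub>R u + t *\<^sub>R v))
      \<le> measure_pmf.expectation p (\<lambda>x. (1 - t) * g x u + t * g x v)"
    using convex_onD[OF assms(3), of _ t u v] t uv
    by (intro integral_mono_AE[OF int int]) (simp add: AE_measure_pmf_iff)
  also have "\<dots> = (1 - t) * measure_pmf.expectation p (\<lambda>x. g x u)
      + t * measure_pmf.expectation p (\<lambda>x. g x v)"
    by (simp add: int)
  finally show "measure_pmf.expectation p (\<lambda>x. g x ((1 - t) *\<^sub>R u + t *\<^sub>R v))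
      \<le> (1 - t) * measure_pmf.expectation p (\<lambda>x. g x u) + t * measure_pmf.expectation p (\<lambda>x. g x v)" .
qed

lemma convex_on_l1_norm: "convex_on UNIV l1_norm"
proof (rule convex_onI)
  fix t :: real and x y :: "'a \<Rightarrow> real"
  assume "t > 0" "t < 1"
  then have "\<bar>(1 - t) * x k + t * y k\<bar> \<le> (1 - t) * \<bar>x k\<bar> + t * \<bar>y k\<bar>" for k
    by (simp add: abs_triangle_ineq[THEN order_trans] abs_mult)
  then have "(\<Sum>k\<in>UNIV. \<bar>(1 - t) * x k + t * y k\<bar>)
      \<le> (1 - t) * (\<Sum>k\<in>UNIV. \<bar>x k\<bar>) + t * (\<Sum>k\<in>UNIV. \<bar>y k\<bar>)"
    by (simp add: sum_mono sum_distrib_left flip: sum.distrib)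
  then show "l1_norm ((1 - t) *\<^sub>R x + t *\<^sub>R y) \<le> (1 - t) * l1_norm x + t * l1_norm y"
    by (simp add: l1_norm_def)
qed simp

lemma linear_avg_edge: "linear (avg_edge e)"
  by (rule linearI) (simp_all add: avg_edge_def fun_eq_iff sum.distrib add_divide_distrib
      sum_distrib_left)

lemma linear_avg_vec: "linear avg_vec"
  by (rule linearI) (simp_all add: avg_vec_def fun_eq_iff sum.distrib add_divide_distrib
      sum_distrib_left)

fun avg_operator :: "'a set set \<Rightarrow> nat \<Rightarrow> (('a \<Rightarrow> real) \<Rightarrow> ('a \<Rightarrow> real)) pmf" where
  "avg_operator E 0 = return_pmf id"
| "avg_operator E (Suc t) = bind_pmf (avg_operator E t)
     (\<lambda>f. if E = {} then return_pmf f else map_pmf (\<lambda>e. avg_edge e \<circ> f) (pmf_of_set E))"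

lemma avg_process_eq_map_avg_operator:
  "avg_process E v t = map_pmf (\<lambda>f. f v) (avg_operator E t)"
  by (induction t)
    (auto simp: map_bind_pmf bind_map_pmf map_pmf_comp intro!: bind_pmf_cong)

lemma linear_avg_operator: "f \<in> set_pmf (avg_operator E t) \<Longrightarrow> linear f"
proof (induction t arbitrary: f)
  case (Suc t)
  then show ?case
    by (auto split: if_splits intro: linear_compose[OF _ linear_avg_edge])
qed (simp add: linear_id)

lemma finite_set_pmf_avg_operator:
  "finite (set_pmf (avg_operator (E :: 'a::finite set set) t))"
  by (induction t) auto

theorem convex_on_expected_l1_deviation:
  fixes E :: "'a::finite set set"
  shows "convex_on UNIV (\<lambda>v. measure_pmf.expectation (avg_process E v t)
           (\<lambda>w. l1_norm (\<lambda>k. w k - avg_vec v k)))"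
proof -
  have "convex_on UNIV (l1_norm \<circ> (\<lambda>v. f v - avg_vec v))"
    if "f \<in> set_pmf (avg_operator E t)" for f
    by (intro convex_on_compose_linear convex_on_l1_norm module_hom_sub
        linear_avg_operator[OF that] linear_avg_vec)
  then have "convex_on UNIV (\<lambda>v. measure_pmf.expectation (avg_operator E t)
               (\<lambda>f. l1_norm (f v - avg_vec v)))"
    by (intro convex_on_expectation finite_set_pmf_avg_operator) (simp_all add: o_def)
  then show ?thesis
    by (simp add: avg_process_eq_map_avg_operator fun_diff_def)
qed

theorem proposition2:
  fixes E :: "('a::finite) set set"
    and l :: nat
    and vs :: "nat \<Rightarrow> 'a \<Rightarrow> real"
    and lam :: "nat \<Rightarrow> real"
    and t :: nat
  assumes "connected_graph E"
    and "\<forall>i<l. lam i \<ge> 0"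
    and "(\<Sum>i<l. lam i) = 1"
  shows "measure_pmf.expectation
           (avg_process E (\<lambda>k. \<Sum>i<l. lam i * vs i k) t)
           (\<lambda>w. l1_norm (\<lambda>k. w k - avg_vec (\<lambda>k. \<Sum>i<l. lam i * vs i k) k))
         \<le> (\<Sum>i<l. lam i *
              measure_pmf.expectation (avg_process E (vs i) t)
                (\<lambda>w. l1_norm (\<lambda>k. w k - avg_vec (vs i) k)))"
proof -
  have combination: "(\<lambda>k. \<Sum>i<l. lam i * vs i k) = (\<Sum>i<l. lam i *\<^sub>R vs i)"
    by (simp add: fun_eq_iff)
  have "{..<l} \<noteq> {}"
    using assms(3) by auto
  then show ?thesis
    unfolding combination
    using convex_on_sum[OF finite_lessThan _ convex_on_expected_l1_deviation, of l lam vs]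
      assms(2,3) by simp
qed

end
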